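(* Let $q$ be a prime power. Every $2$-$(n,k,\lambda)_q$ design is additive under $\mathrm{EA}(q^n)$.
   Context: A $2$-$(n,k,\lambda)_q$ design (subspace design) is a $2$-$\left(\frac{q^n-1}{q-1},\frac{q^k-1}{q-1},\lambda\right)$ design whose points are the points of $\mathrm{PG}(n-1,q)$ and whose blocks are (point sets of) certain $(k-1)$-dimensional projective subspaces of $\mathrm{PG}(n-1,q)$, such that every pair of distinct points lies in exactly $\lambda$ blocks. $\mathrm{EA}(q^n)$ denotes the elementary abelian group of order $q^n$. A design $(V,\mathscr B)$ is additive under an abelian group $G$ if there is an injective map $f:V\to G$ such that $\sum_{x\in B}f(x)=0$ for every block $B\in\mathscr B$. *)

theory Defs
  imports "HOL-Analysis.Analysis"
begin

text \<open>Points of PG(n-1,q): the one-dimensional subspaces of F_q^n, where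
  F_q is a finite field (type 'a) and n = CARD('n).\<close>
definition pg_points :: "('a::field ^ 'n) set set" where
  "pg_points = {vec.span {v} | v. v \<noteq> 0}"

definition points_of :: "('a::field ^ 'n) set \<Rightarrow> ('a ^ 'n) set set" where
  "points_of W = {P \<in> pg_points. P \<subseteq> W}"

text \<open>2-(n,k,lambda)_q design: blocks are point sets of (k-1)-dim projective subspaces,
  i.e. of k-dimensional vector subspaces, and every pair of distinct points lies
  in exactly lambda blocks (lambda a positive integer).\<close>
definition subspace_design_2 ::
  "nat \<Rightarrow> nat \<Rightarrow> ('a::field ^ 'n) set set set \<Rightarrow> bool" where
  "subspace_design_2 k lam B \<longleftrightarrow>
     lam \<ge> 1 \<and>
     (\<forall>b\<in>B. \<exists>W. vec.subspace W \<and> vec.dim W = k \<and> b = points_of W) \<and>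
     (\<forall>P\<in>pg_points. \<forall>Q\<in>pg_points. P \<noteq> Q \<longrightarrow> card {b\<in>B. P \<in> b \<and> Q \<in> b} = lam)"

definition additive_under :: "'p set \<Rightarrow> 'p set set \<Rightarrow> ('p \<Rightarrow> 'g::ab_group_add) \<Rightarrow> bool" where
  "additive_under V B f \<longleftrightarrow> inj_on f V \<and> (\<forall>b\<in>B. (\<Sum>x\<in>b. f x) = 0)"

end

(*
  Identify F_q^n with the field F_(q^n), realised as the roots of x^(q^n) = x in the algebraic
  closure of F_q, by an F_q-linear bijection psi, and label the point <v> by
  psi^-1 (psi(v)^(q-1)). This does not depend on the representative v, since c^(q-1) = 1 for
  c in F_q^*, and distinct points get distinct labels, since psi(w)^(q-1) = psi(v)^(q-1) forces
  psi(w)/psi(v) into F_q^*. Summing x^(q-1) over the vectors of a subspace W gives minus the sum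
  of the labels of its points. If dim W >= 2, W is a union of cosets of a plane span{b1, b2},
  and over such a coset the sum vanishes: the sum of (a + t b)^(q-1) over t in F_q is
  -b^(q-1) whatever a is, so summing once more over F_q gives q * (-b^(q-1)) = 0.
  When n = 1 there is a single point and the zero map does the job.
*)

theory Submission
  imports Defs "HOL-Algebra.Algebraic_Closure_Type" "HOL-Number_Theory.Residues"
begin

(* Frees the notation v $ i for the components of vectors. *)
unbundle no Formal_Power_Series.fps_syntax

section \<open>Finite fields\<close>

lemma card_finite_field_ge_2: "2 \<le> CARD('a::{finite,field})"
proof -
  have "card {0::'a, 1} \<le> CARD('a)" by (rule card_mono) auto
  thus ?thesis by simp
qed

lemma of_nat_card_finite_field [simp]: "of_nat CARD('a) = (0::'a::{finite,field})"
  using CHAR_dvd_CARD[where 'a='a] of_nat_eq_0_iff_char_dvd by blast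

lemma power_card_minus_1_eq_1:
  fixes x :: "'a::{finite,field}"
  assumes "x \<noteq> 0"
  shows "x ^ (CARD('a) - 1) = 1"
proof -
  define R where "R = (ring_of_type_algebra :: 'a ring)"
  interpret R: field R unfolding R_def by rule
  interpret G: group "Multiplicative_Group.mult_of R" by (rule R.field_mult_group)
  have pow: "x [^]\<^bsub>Multiplicative_Group.mult_of R\<^esub> n = x ^ n" for n :: nat
    unfolding Multiplicative_Group.nat_pow_mult_of
    by (induction n) (simp_all add: R_def ring_of_type_algebra_def mult.commute)
  have order: "order (Multiplicative_Group.mult_of R) = CARD('a) - 1"
    by (simp add: R.order_mult_of order_def R_def ring_of_type_algebra_def)
  have "x ^ (CARD('a) - 1)
      = x [^]\<^bsub>Multiplicative_Group.mult_of R\<^esub> order (Multiplicative_Group.mult_of R)"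
    by (simp only: pow order)
  also have "\<dots> = \<one>\<^bsub>Multiplicative_Group.mult_of R\<^esub>"
    by (rule G.pow_order_eq_1) (simp_all add: assms order_def R_def ring_of_type_algebra_def)
  also have "\<dots> = 1" by (simp add: R_def ring_of_type_algebra_def)
  finally show ?thesis .
qed

lemma power_card_eq_self: "x ^ CARD('a) = (x::'a::{finite,field})"
proof -
  have "x ^ CARD('a) = x * x ^ (CARD('a) - 1)"
    using card_finite_field_ge_2[where 'a='a] by (simp flip: power_Suc)
  thus ?thesis using power_card_minus_1_eq_1[of x] by (cases "x = 0") simp_all
qed

lemma power_card_power_eq_self: "x ^ (CARD('a) ^ m) = (x::'a::{finite,field})"
  by (induction m) (simp_all add: power_mult power_card_eq_self)

text \<open>As (x + 1)^q = x^q + 1 holds on all of F_q, the polynomial formed by the middle binomial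
  coefficients vanishes everywhere although its degree is less than q.\<close>
lemma of_nat_card_choose_eq_0:
  assumes "0 < i" "i < CARD('a::{finite,field})"
  shows "of_nat (CARD('a) choose i) = (0::'a)"
proof -
  define q where "q = CARD('a)"
  define D :: "'a poly" where "D = (\<Sum>k\<in>{1..<q}. Polynomial.monom (of_nat (q choose k)) k)"
  have "Polynomial.degree D \<le> q - 1" unfolding D_def
    by (intro degree_sum_le) (auto intro: order.trans[OF degree_monom_le])
  hence deg: "Polynomial.degree D < q"
    using card_finite_field_ge_2[where 'a='a] unfolding q_def by linarith
  have "(x + 1) ^ q = 1 + x ^ q + poly D x" for x
  proof -
    have "(x + 1) ^ q = (\<Sum>k\<in>insert 0 (insert q {1..<q}). of_nat (q choose k) * x ^ k)"
      by (subst binomial_ring) (intro sum.cong, auto)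
    thus ?thesis
      using card_finite_field_ge_2[where 'a='a] by (simp add: q_def D_def poly_sum poly_monom)
  qed
  hence "poly D x = 0" for x by (simp add: q_def power_card_eq_self)
  hence "D = 0" using deg by (intro poly_eqI_degree[of UNIV]) (auto simp: q_def)
  hence "Polynomial.coeff D i = 0" by simp
  thus ?thesis using assms by (simp add: D_def coeff_sum q_def)
qed

lemma card_power_eq_le:
  fixes c :: "'a::idom"
  assumes "0 < j"
  shows "finite {x. x ^ j = c}" "card {x. x ^ j = c} \<le> j"
proof -
  define R :: "'a poly" where "R = Polynomial.monom 1 j + [:-c:]"
  have deg: "Polynomial.degree R = j"
    using assms unfolding R_def by (subst degree_add_eq_left) (auto simp: degree_monom_eq)
  hence "R \<noteq> 0" using assms by auto
  moreover have "{x. x ^ j = c} = {x. poly R x = 0}" by (simp add: R_def poly_monom)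
  ultimately show "finite {x. x ^ j = c}" "card {x. x ^ j = c} \<le> j"
    using poly_roots_finite[of R] card_poly_roots_bound[of R] deg by simp_all
qed

lemma sum_power_finite_field_eq_0:
  assumes "j < CARD('a::{finite,field}) - 1"
  shows "(\<Sum>t::'a\<in>UNIV. t ^ j) = 0"
proof (cases "j = 0")
  case False
  have "\<not> UNIV - {0} \<subseteq> {x::'a. x ^ j = 1}"
  proof
    assume "UNIV - {0} \<subseteq> {x::'a. x ^ j = 1}"
    hence "CARD('a) - 1 \<le> card {x::'a. x ^ j = 1}"
      using card_mono[of "{x::'a. x ^ j = 1}" "UNIV - {0}"] by (simp add: card_Diff_singleton)
    with card_power_eq_le(2)[of j "1::'a"] False assms show False by linarith
  qed
  then obtain c :: 'a where c: "c \<noteq> 0" "c ^ j \<noteq> 1" by blast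
  have "(\<Sum>t\<in>UNIV. t ^ j) = (\<Sum>t\<in>UNIV. (c * t) ^ j)"
    by (rule sum.reindex_bij_witness[of _ "\<lambda>t. c * t" "\<lambda>t. t / c"]) (use c in auto)
  also have "\<dots> = c ^ j * (\<Sum>t\<in>UNIV. t ^ j)"
    by (simp add: power_mult_distrib sum_distrib_left)
  finally have "(1 - c ^ j) * (\<Sum>t\<in>UNIV. t ^ j) = 0" by (simp add: algebra_simps)
  thus ?thesis using c by simp
qed simp

lemma sum_power_card_minus_1: "(\<Sum>t::'a::{finite,field}\<in>UNIV. t ^ (CARD('a) - 1)) = -1"
proof -
  have q: "2 \<le> CARD('a)" by (rule card_finite_field_ge_2)
  have "(\<Sum>t::'a\<in>UNIV. t ^ (CARD('a) - 1)) = (\<Sum>t\<in>UNIV - {0::'a}. t ^ (CARD('a) - 1))"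
    using q by (intro sum.mono_neutral_right) auto
  also have "\<dots> = (\<Sum>t\<in>UNIV - {0::'a}. 1)" by (intro sum.cong refl power_card_minus_1_eq_1) auto
  also have "\<dots> = of_nat CARD('a) - 1" using q by (simp add: card_Diff_singleton)
  finally show ?thesis by simp
qed

lemma power_card_add:
  fixes x y :: "'b::comm_semiring_1"
  assumes "CHAR('b) = CHAR('a::{finite,field})"
  shows "(x + y) ^ CARD('a) = x ^ CARD('a) + y ^ CARD('a)"
proof -
  let ?q = "CARD('a)"
  have "(x + y) ^ ?q = (\<Sum>k\<le>?q. of_nat (?q choose k) * x ^ k * y ^ (?q - k))"
    by (rule binomial_ring)
  also have "\<dots> = (\<Sum>k\<in>{0, ?q}. of_nat (?q choose k) * x ^ k * y ^ (?q - k))"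
  proof (intro sum.mono_neutral_right ballI)
    fix k assume "k \<in> {..?q} - {0, ?q}"
    hence "of_nat (?q choose k) = (0::'a)" by (intro of_nat_card_choose_eq_0) auto
    hence "of_nat (?q choose k) = (0::'b)" using assms by (simp add: of_nat_eq_0_iff_char_dvd)
    thus "of_nat (?q choose k) * x ^ k * y ^ (?q - k) = 0" by simp
  qed auto
  finally show ?thesis using card_finite_field_ge_2[where 'a='a] by (simp add: add.commute)
qed

lemma power_card_power_add:
  fixes x y :: "'b::comm_semiring_1"
  assumes "CHAR('b) = CHAR('a::{finite,field})"
  shows "(x + y) ^ (CARD('a) ^ m) = x ^ (CARD('a) ^ m) + y ^ (CARD('a) ^ m)"
  by (induction m) (simp_all add: power_Suc2 power_mult power_card_add[OF assms] del: power_Suc)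

section \<open>Separable polynomials over algebraically closed fields\<close>

lemma order_le_1_if_poly_pderiv_nonzero:
  fixes p :: "'a::idom poly"
  assumes "poly (pderiv p) a \<noteq> 0"
  shows "Polynomial.order a p \<le> 1"
proof (rule ccontr)
  assume "\<not> Polynomial.order a p \<le> 1"
  hence "[:-a, 1:] ^ Suc 1 dvd p"
    by (intro order_divides[THEN iffD2]) auto
  then obtain r where "p = [:-a, 1:] ^ Suc 1 * r" by (elim dvdE)
  hence "pderiv p =
      [:-a, 1:] ^ Suc 1 * pderiv r + Polynomial.smult (of_nat (Suc 1)) (r * [:-a, 1:] ^ 1)"
    by (simp only: lemma_order_pderiv1)
  hence "poly (pderiv p) a = 0" by simp
  with assms show False by contradiction
qed

lemma card_roots_alg_closed:
  fixes p :: "'a::alg_closed_field poly"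
  assumes "p \<noteq> 0" "\<And>a. Polynomial.order a p \<le> 1"
  shows "card {x. poly p x = 0} = Polynomial.degree p"
proof -
  obtain A where A: "size A = Polynomial.degree p"
      "p = Polynomial.smult (Polynomial.lead_coeff p) (\<Prod>x\<in>#A. [:-x, 1:])"
    using alg_closed_imp_factorization[OF assms(1)] by blast
  have "proots p = proots (\<Prod>x\<in>#A. [:-x, 1:])"
    using assms(1) by (subst A(2)) simp
  also have "\<dots> = A"
  proof (induction A)
    case (add x A)
    have "proots (\<Prod>y\<in>#add_mset x A. [:-y, 1:]) = proots ([:-x, 1:] * (\<Prod>y\<in>#A. [:-y, 1:]))"
      by simp
    also have "\<dots> = add_mset x A"
      by (subst proots_mult) (auto simp: add.IH)
    finally show ?case .
  qed simp
  finally have "Polynomial.degree p = size (proots p)" using A(1) by simp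
  also have "\<dots> = (\<Sum>x\<in>set_mset (proots p). count (proots p) x)"
    by (rule size_multiset_overloaded_eq)
  also have "\<dots> = (\<Sum>x\<in>set_mset (proots p). 1)"
  proof (rule sum.cong[OF refl])
    fix x assume "x \<in># proots p"
    thus "count (proots p) x = 1" using assms(2)[of x] assms(1) by (auto simp: le_Suc_eq order_root)
  qed
  also have "\<dots> = card {x. poly p x = 0}" using assms(1) by simp
  finally show ?thesis ..
qed

lemma card_power_eq_self_alg_closed:
  fixes Q :: nat
  assumes "2 \<le> Q" "of_nat Q = (0::'a::alg_closed_field)"
  shows "card {x::'a. x ^ Q = x} = Q"
proof -
  define P :: "'a poly" where "P = Polynomial.monom 1 Q + [:0, -1:]"
  have deg: "Polynomial.degree P = Q"
    unfolding P_def by (subst degree_add_eq_left) (use assms in \<open>auto simp: degree_monom_eq\<close>)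
  have "pderiv P = [:-1:]"
    using assms by (simp add: P_def pderiv_add pderiv_monom pderiv_pCons)
  hence "Polynomial.order a P \<le> 1" for a by (intro order_le_1_if_poly_pderiv_nonzero) simp
  moreover have "P \<noteq> 0" using deg assms by auto
  ultimately have "card {x. poly P x = 0} = Q" using card_roots_alg_closed deg by metis
  moreover have "{x. poly P x = 0} = {x. x ^ Q = x}" by (simp add: P_def poly_monom)
  ultimately show ?thesis by simp
qed

section \<open>Vector spaces over finite fields\<close>

lemma card_span_le:
  fixes scale :: "'a::{finite,field} \<Rightarrow> 'b::ab_group_add \<Rightarrow> 'b"
  assumes "vector_space scale" "finite B"
  shows "card (module.span scale B) \<le> CARD('a) ^ card B"
proof -
  interpret V: vector_space scale by fact
  let ?comb = "\<lambda>u. \<Sum>b\<in>B. scale (u b) b"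
  have "V.span B \<subseteq> ?comb ` (B \<rightarrow>\<^sub>E UNIV)"
  proof
    fix x assume "x \<in> V.span B"
    then obtain u where "x = ?comb u" using V.span_finite[OF assms(2)] by auto
    also have "\<dots> = ?comb (restrict u B)" by (intro sum.cong) auto
    finally have "x = ?comb (restrict u B)" .
    moreover have "restrict u B \<in> B \<rightarrow>\<^sub>E UNIV" by simp
    ultimately show "x \<in> ?comb ` (B \<rightarrow>\<^sub>E UNIV)" by (rule image_eqI)
  qed
  hence "card (V.span B) \<le> card (?comb ` (B \<rightarrow>\<^sub>E UNIV))"
    by (intro card_mono finite_imageI finite_PiE assms(2)) auto
  also have "\<dots> \<le> card (B \<rightarrow>\<^sub>E (UNIV :: 'a set))"
    by (intro card_image_le finite_PiE assms(2)) auto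
  also have "\<dots> = CARD('a) ^ card B" by (simp add: card_PiE assms(2))
  finally show ?thesis .
qed

lemma obtain_linear_bij_onto_subspace:
  fixes scale :: "'a::{finite,field} \<Rightarrow> 'b::ab_group_add \<Rightarrow> 'b"
  assumes "vector_space scale" "module.subspace scale K" "card K = CARD('a) ^ CARD('n)"
  obtains \<psi> :: "'a ^ 'n \<Rightarrow> 'b"
  where "\<And>v w. \<psi> (v + w) = \<psi> v + \<psi> w" "\<And>c v. \<psi> (c *s v) = scale c (\<psi> v)"
    and "inj \<psi>" "range \<psi> = K"
proof -
  interpret V: vector_space scale by fact
  have "finite K" using assms(3) by (intro card_ge_0_finite) simp
  obtain Bs where Bs: "Bs \<subseteq> K" "V.independent Bs" "K \<subseteq> V.span Bs"
    by (rule V.basis_exists)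
  have "finite Bs" using \<open>finite K\<close> Bs(1) by (rule finite_subset[rotated])
  have "V.span Bs = K" by (rule subset_antisym[OF V.span_minimal[OF Bs(1) assms(2)] Bs(3)])
  hence "CARD('a) ^ CARD('n) \<le> CARD('a) ^ card Bs"
    using card_span_le[OF assms(1) \<open>finite Bs\<close>] assms(3) by simp
  hence "CARD('n) \<le> card Bs"
    using card_finite_field_ge_2[where 'a='a] by (simp add: power_le_imp_le_exp)
  then obtain e :: "'n \<Rightarrow> 'b" where e: "range e \<subseteq> Bs" "inj e"
    using card_le_inj[OF finite_class.finite_UNIV \<open>finite Bs\<close>] by blast
  define \<psi> where "\<psi> v = (\<Sum>i\<in>UNIV. scale (v $ i) (e i))" for v :: "'a ^ 'n"
  have add: "\<psi> (v + w) = \<psi> v + \<psi> w" for v w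
    by (simp add: \<psi>_def V.scale_left_distrib sum.distrib)
  have scale: "\<psi> (c *s v) = scale c (\<psi> v)" for c v
    by (simp add: \<psi>_def V.scale_sum_right)
  have "inj \<psi>"
  proof (rule injI)
    fix v w assume "\<psi> v = \<psi> w"
    hence comb: "(\<Sum>b\<in>range e. scale ((v - w) $ inv_into UNIV e b) b) = 0"
      by (simp add: sum.reindex[OF e(2)] inv_f_f[OF e(2)] \<psi>_def V.scale_left_diff_distrib
          sum_subtractf)
    have "(v - w) $ i = 0" for i
      using V.independentD[OF Bs(2) finite_imageI[OF finite_class.finite_UNIV] e(1) comb, of "e i"]
      by (simp add: inv_f_f[OF e(2)])
    thus "v = w" by (simp add: vec_eq_iff)
  qed
  moreover have "range \<psi> \<subseteq> K"
    using Bs(1) e(1) by (auto simp: \<psi>_def intro!: V.subspace_sum V.subspace_scale assms(2))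
  moreover have "card (range \<psi>) = card K"
    using card_image[OF inj_on_subset[OF \<open>inj \<psi>\<close>]] assms(3) by simp
  ultimately have "range \<psi> = K" using card_subset_eq[OF \<open>finite K\<close>] by blast
  with add scale \<open>inj \<psi>\<close> show thesis by (rule that)
qed

section \<open>The subfield of order q^m of the algebraic closure\<close>

lemma of_nat_card_alg_closure [simp]: "(of_nat CARD('a) :: 'a::{finite,field} alg_closure) = 0"
  by (metis of_nat_card_finite_field to_ac_0 to_ac_of_nat)

lemma to_ac_power_card_minus_1_eq_1:
  "c \<noteq> 0 \<Longrightarrow> to_ac c ^ (CARD('a) - 1) = (1 :: 'a::{finite,field} alg_closure)"
  by (metis power_card_minus_1_eq_1 to_ac_1 to_ac_power)

lemma subspace_power_card_power_eq_self:
  "module.subspace (\<lambda>c x. to_ac c * x)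
     {x :: 'a::{finite,field} alg_closure. x ^ (CARD('a) ^ m) = x}"
proof -
  interpret ac: vector_space "\<lambda>c (x :: 'a alg_closure). to_ac c * x"
    by unfold_locales (simp_all add: algebra_simps)
  show ?thesis
    by (intro ac.subspaceI)
       (simp_all add: power_card_power_add power_mult_distrib power_card_power_eq_self
        flip: to_ac_power)
qed

lemma card_power_card_power_eq_self:
  assumes "0 < m"
  shows "card {x :: 'a::{finite,field} alg_closure. x ^ (CARD('a) ^ m) = x} = CARD('a) ^ m"
proof (rule card_power_eq_self_alg_closed)
  show "2 \<le> CARD('a) ^ m"
    using card_finite_field_ge_2[where 'a='a] self_le_power[of "CARD('a)" m] assms by linarith
  show "(of_nat (CARD('a) ^ m) :: 'a alg_closure) = 0" using assms by simp
qed

lemma in_range_to_ac_if_power_card_minus_1_eq_1: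
  fixes r :: "'a::{finite,field} alg_closure"
  assumes "r ^ (CARD('a) - 1) = 1"
  shows "r \<in> range to_ac"
proof (rule ccontr)
  assume r: "r \<notin> range to_ac"
  let ?S = "{x :: 'a alg_closure. x ^ (CARD('a) - 1) = 1}"
  have pos: "0 < CARD('a) - 1" using card_finite_field_ge_2[where 'a='a] by simp
  have "to_ac ` (UNIV - {0}) \<subseteq> ?S" using to_ac_power_card_minus_1_eq_1 by blast
  hence "insert r (to_ac ` (UNIV - {0})) \<subseteq> ?S" using assms by blast
  hence "card (insert r (to_ac ` (UNIV - {0}))) \<le> card ?S"
    by (rule card_mono[OF card_power_eq_le(1)[OF pos]])
  also have "\<dots> \<le> CARD('a) - 1" by (rule card_power_eq_le(2)[OF pos])
  finally have "card (insert r (to_ac ` (UNIV - {0}))) \<le> CARD('a) - 1" .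
  moreover have "card (insert r (to_ac ` (UNIV - {0}))) = CARD('a)"
    using r pos card_image[OF inj_on_subset[OF inj_to_ac, of "UNIV - {0::'a}"]]
    by (subst card_insert_disjoint) (auto simp: card_Diff_singleton)
  ultimately show False using pos by linarith
qed

lemma sum_power_affine_line:
  fixes A B :: "'a::{finite,field} alg_closure"
  shows "(\<Sum>t\<in>(UNIV::'a set). (A + to_ac t * B) ^ (CARD('a) - 1)) = - (B ^ (CARD('a) - 1))"
proof -
  define n where "n = CARD('a) - 1"
  define cf where "cf k = of_nat (n choose k) * B ^ k * A ^ (n - k)" for k
  have "(A + to_ac t * B) ^ n = (\<Sum>k\<le>n. cf k * to_ac (t ^ k))" for t
  proof -
    have "(A + to_ac t * B) ^ n = (\<Sum>k\<le>n. of_nat (n choose k) * (to_ac t * B) ^ k * A ^ (n - k))"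
      by (subst add.commute, rule binomial_ring)
    thus ?thesis by (simp add: cf_def power_mult_distrib mult_ac)
  qed
  hence "(\<Sum>t\<in>(UNIV::'a set). (A + to_ac t * B) ^ n)
      = (\<Sum>t\<in>(UNIV::'a set). \<Sum>k\<le>n. cf k * to_ac (t ^ k))"
    by simp
  also have "\<dots> = (\<Sum>k\<le>n. cf k * to_ac (\<Sum>t\<in>(UNIV::'a set). t ^ k))"
    by (subst sum.swap) (simp add: sum_distrib_left to_ac_sum)
  also have "\<dots> = (\<Sum>k\<in>{n}. cf k * to_ac (\<Sum>t\<in>(UNIV::'a set). t ^ k))"
    by (intro sum.mono_neutral_right) (auto simp: n_def sum_power_finite_field_eq_0)
  also have "\<dots> = - (B ^ n)" using sum_power_card_minus_1[where 'a='a] by (simp add: n_def cf_def)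
  finally show ?thesis unfolding n_def .
qed

section \<open>Points of projective space\<close>

lemma vec_span_singleton_eq_iff:
  fixes v x :: "'a::field ^ 'n"
  assumes "v \<noteq> 0"
  shows "vec.span {x} = vec.span {v} \<longleftrightarrow> (\<exists>c. c \<noteq> 0 \<and> x = c *s v)"
proof
  assume eq: "vec.span {x} = vec.span {v}"
  have "x \<in> vec.span {v}" using eq vec.span_base[of x "{x}"] by simp
  then obtain c where c: "x = c *s v" by (auto simp: vec.span_singleton)
  have "v \<in> vec.span {x}" using eq vec.span_base[of v "{v}"] by simp
  hence "x \<noteq> 0" using assms by (auto simp: vec.span_singleton)
  with c show "\<exists>c. c \<noteq> 0 \<and> x = c *s v" by auto
next
  assume "\<exists>c. c \<noteq> 0 \<and> x = c *s v"
  then obtain c where "c \<noteq> 0" "x = c *s v" by blast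
  hence "k *s x = (k * c) *s v" "k *s v = (k / c) *s x" for k by simp_all
  thus "vec.span {x} = vec.span {v}"
    unfolding vec.span_singleton by (metis (no_types, lifting) rangeE rangeI subsetI subset_antisym)
qed

lemma two_le_dim_iff:
  fixes W :: "('a::field ^ 'n) set"
  shows "2 \<le> vec.dim W \<longleftrightarrow> (\<exists>u\<in>W. \<exists>w\<in>W. u \<noteq> 0 \<and> w \<notin> vec.span {u})"
proof
  assume "\<exists>u\<in>W. \<exists>w\<in>W. u \<noteq> 0 \<and> w \<notin> vec.span {u}"
  then obtain u w where uw: "u \<in> W" "w \<in> W" "u \<noteq> 0" "w \<notin> vec.span {u}" by blast
  have "w \<noteq> u" using uw(4) vec.span_base[of u "{u}"] by auto
  have "vec.independent {w, u}"
    using uw(3,4) by (simp add: vec.independent_insert)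
  hence "card {w, u} \<le> vec.dim W"
    by (rule vec.independent_card_le_dim[rotated]) (use uw in auto)
  thus "2 \<le> vec.dim W" using \<open>w \<noteq> u\<close> by simp
next
  assume dim: "2 \<le> vec.dim W"
  have "\<not> W \<subseteq> vec.span {}"
  proof
    assume "W \<subseteq> vec.span {}"
    hence "vec.dim W \<le> card ({} :: ('a ^ 'n) set)" by (intro vec.dim_le_card) auto
    with dim show False by (simp only: card.empty)
  qed
  then obtain u where u: "u \<in> W" "u \<noteq> 0" by auto
  have "\<not> W \<subseteq> vec.span {u}"
    using vec.dim_le_card[of W "{u}"] dim by auto
  with u show "\<exists>u\<in>W. \<exists>w\<in>W. u \<noteq> 0 \<and> w \<notin> vec.span {u}" by auto
qed

lemma inj_scale_pair:
  fixes b1 b2 :: "'a::field ^ 'n"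
  assumes "b2 \<noteq> 0" "b1 \<notin> vec.span {b2}"
  shows "inj (\<lambda>(s, t). s *s b1 + t *s b2)"
proof (rule injI, clarify)
  fix s t s' t' assume "s *s b1 + t *s b2 = s' *s b1 + t' *s b2"
  hence eq: "(s - s') *s b1 = (t' - t) *s b2"
    by (simp add: algebra_simps)
  have "s = s'"
  proof (rule ccontr)
    assume "s \<noteq> s'"
    have "inverse (s - s') *s ((t' - t) *s b2) \<in> vec.span {b2}"
      by (intro vec.span_scale vec.span_base) simp
    also have "inverse (s - s') *s ((t' - t) *s b2) = inverse (s - s') *s ((s - s') *s b1)"
      by (simp only: eq)
    also have "\<dots> = b1"
      using \<open>s \<noteq> s'\<close> by (simp only: vec.scale_scale) simp
    finally show False using assms(2) by contradiction
  qed
  with eq assms(1) show "s = s' \<and> t = t'" by simp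
qed

lemma sum_eq_0_if_coset_sums_eq_0:
  fixes g :: "'v::ab_group_add \<Rightarrow> 'b::comm_monoid_add"
  assumes "finite W" "0 \<in> U" "\<And>u u'. u \<in> U \<Longrightarrow> u' \<in> U \<Longrightarrow> u - u' \<in> U"
    and "\<And>x u. x \<in> W \<Longrightarrow> u \<in> U \<Longrightarrow> x + u \<in> W"
    and "\<And>x. x \<in> W \<Longrightarrow> (\<Sum>u\<in>U. g (x + u)) = 0"
  shows "(\<Sum>x\<in>W. g x) = 0"
proof -
  define coset where "coset x = (+) x ` U" for x
  have add: "u + u' \<in> U" if "u \<in> U" "u' \<in> U" for u u'
    using assms(3)[OF that(1) assms(3)[OF assms(2) that(2)]] by simp
  have mem_coset: "y \<in> coset x \<longleftrightarrow> y - x \<in> U" for x y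
    by (force simp: coset_def)
  have coset_eq: "coset y = coset x" if "y \<in> coset x" for x y
  proof -
    have "z - y \<in> U \<longleftrightarrow> z - x \<in> U" for z
      using that add[of "z - y" "y - x"] assms(3)[of "z - x" "y - x"]
      by (auto simp: mem_coset)
    thus ?thesis by (auto simp: mem_coset)
  qed
  have fiber: "{x \<in> W. coset x = coset x0} = coset x0" if "x0 \<in> W" for x0
  proof (intro equalityI subsetI)
    fix y assume "y \<in> {x \<in> W. coset x = coset x0}"
    moreover have "y \<in> coset y" using assms(2) by (simp add: mem_coset)
    ultimately show "y \<in> coset x0" by simp
  next
    fix y assume "y \<in> coset x0"
    thus "y \<in> {x \<in> W. coset x = coset x0}" using coset_eq assms(4) that by (auto simp: coset_def)
  qed
  have "(\<Sum>x\<in>W. g x) = (\<Sum>C\<in>coset ` W. \<Sum>x\<in>{x \<in> W. coset x = C}. g x)"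
    by (rule sum.group[symmetric]) (simp_all add: assms(1))
  also have "\<dots> = (\<Sum>C\<in>coset ` W. 0)"
  proof (rule sum.cong[OF refl])
    fix C assume "C \<in> coset ` W"
    then obtain x0 where "x0 \<in> W" "C = coset x0" by blast
    thus "(\<Sum>x\<in>{x \<in> W. coset x = C}. g x) = 0"
      using fiber assms(5) by (simp add: coset_def sum.reindex)
  qed
  finally show ?thesis by simp
qed

definition point_rep :: "('a::field ^ 'n) set \<Rightarrow> 'a ^ 'n" where
  "point_rep P = (SOME v. v \<noteq> 0 \<and> P = vec.span {v})"

lemma point_rep:
  assumes "P \<in> pg_points"
  shows "point_rep P \<noteq> 0" "vec.span {point_rep P} = P"
proof -
  have "\<exists>v. v \<noteq> 0 \<and> P = vec.span {v}" using assms by (auto simp: pg_points_def)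
  hence "point_rep P \<noteq> 0 \<and> P = vec.span {point_rep P}" unfolding point_rep_def by (rule someI_ex)
  thus "point_rep P \<noteq> 0" "vec.span {point_rep P} = P" by auto
qed

lemma sum_nonzero_vectors_by_points:
  fixes g :: "'a::{finite,field} ^ 'n \<Rightarrow> 'b::comm_monoid_add"
  assumes "vec.subspace W"
  shows "(\<Sum>x\<in>W - {0}. g x) = (\<Sum>P\<in>points_of W. \<Sum>c\<in>UNIV - {0}. g (c *s point_rep P))"
proof -
  have "(\<lambda>x. vec.span {x}) ` (W - {0}) \<subseteq> points_of W"
    using vec.span_minimal[of _ W] assms by (auto simp: points_of_def pg_points_def)
  hence "(\<Sum>x\<in>W - {0}. g x)
      = (\<Sum>P\<in>points_of W. \<Sum>x\<in>{x \<in> W - {0}. vec.span {x} = P}. g x)"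
    by (intro sum.group[symmetric]) (simp_all add: points_of_def)
  also have "\<dots> = (\<Sum>P\<in>points_of W. \<Sum>c\<in>UNIV - {0}. g (c *s point_rep P))"
  proof (rule sum.cong[OF refl])
    fix P assume P: "P \<in> points_of W"
    hence rep: "point_rep P \<noteq> 0" "vec.span {point_rep P} = P" "P \<subseteq> W"
      using point_rep by (auto simp: points_of_def)
    have "{x \<in> W - {0}. vec.span {x} = P} = (\<lambda>c. c *s point_rep P) ` (UNIV - {0})"
    proof (intro equalityI subsetI)
      fix x assume "x \<in> {x \<in> W - {0}. vec.span {x} = P}"
      thus "x \<in> (\<lambda>c. c *s point_rep P) ` (UNIV - {0})"
        using vec_span_singleton_eq_iff[OF rep(1), of x] rep(2) by auto
    next
      fix x assume "x \<in> (\<lambda>c. c *s point_rep P) ` (UNIV - {0})"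
      then obtain c where c: "c \<noteq> 0" "x = c *s point_rep P" by blast
      hence span: "vec.span {x} = P"
        using vec_span_singleton_eq_iff[OF rep(1), of x] rep(2) by auto
      moreover have "x \<in> W" using vec.span_base[of x "{x}"] span rep(3) by auto
      ultimately show "x \<in> {x \<in> W - {0}. vec.span {x} = P}" using c rep(1) by simp
    qed
    moreover have "inj_on (\<lambda>c. c *s point_rep P) (UNIV - {0})"
      using rep(1) by (auto intro!: inj_onI)
    ultimately show "(\<Sum>x\<in>{x \<in> W - {0}. vec.span {x} = P}. g x)
        = (\<Sum>c\<in>UNIV - {0}. g (c *s point_rep P))"
      by (simp add: sum.reindex)
  qed
  finally show ?thesis .
qed

section \<open>The additive labelling\<close>

locale vec_subfield_iso =
  fixes \<psi> :: "'a::{finite,field} ^ 'n \<Rightarrow> 'a alg_closure"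
  assumes psi_add: "\<psi> (v + w) = \<psi> v + \<psi> w"
    and psi_scale: "\<psi> (c *s v) = to_ac c * \<psi> v"
    and inj_psi: "inj \<psi>"
    and range_psi: "range \<psi> = {x. x ^ (CARD('a) ^ CARD('n)) = x}"
begin

lemma psi_0 [simp]: "\<psi> 0 = 0"
  by (metis add.right_neutral add_left_cancel psi_add)

lemma psi_eq_0_iff [simp]: "\<psi> v = 0 \<longleftrightarrow> v = 0"
  using inj_psi psi_0 by (metis injD)

lemma psi_sum: "\<psi> (\<Sum>i\<in>A. f i) = (\<Sum>i\<in>A. \<psi> (f i))"
  by (induction A rule: infinite_finite_induct) (simp_all add: psi_add)

definition psi_pow :: "'a ^ 'n \<Rightarrow> 'a alg_closure" where
  "psi_pow v = \<psi> v ^ (CARD('a) - 1)"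

lemma psi_pow_0 [simp]: "psi_pow 0 = 0"
  using card_finite_field_ge_2[where 'a='a] by (simp add: psi_pow_def)

lemma psi_pow_scale:
  assumes "c \<noteq> 0"
  shows "psi_pow (c *s v) = psi_pow v"
  using to_ac_power_card_minus_1_eq_1[OF assms]
  by (simp add: psi_pow_def psi_scale power_mult_distrib)

lemma psi_pow_in_range: "psi_pow v \<in> range \<psi>"
proof -
  let ?Q = "CARD('a) ^ CARD('n)"
  have "\<psi> v ^ ?Q = \<psi> v" using range_psi by auto
  hence "psi_pow v ^ ?Q = psi_pow v"
    by (simp add: psi_pow_def flip: power_mult) (metis mult.commute power_mult)
  thus ?thesis using range_psi by simp
qed

lemma psi_pow_eq_imp_scale:
  assumes "v \<noteq> 0" "w \<noteq> 0" "psi_pow v = psi_pow w"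
  shows "\<exists>c. c \<noteq> 0 \<and> w = c *s v"
proof -
  define r where "r = \<psi> w / \<psi> v"
  have "r ^ (CARD('a) - 1) = psi_pow w / psi_pow v"
    by (simp add: r_def psi_pow_def power_divide)
  also have "\<dots> = 1" using assms by (simp add: psi_pow_def)
  finally obtain c where c: "r = to_ac c"
    using in_range_to_ac_if_power_card_minus_1_eq_1 by blast
  have "\<psi> w = \<psi> (c *s v)" using assms(1) by (simp add: psi_scale flip: c) (simp add: r_def)
  hence "w = c *s v" using inj_psi by (simp add: inj_eq)
  moreover have "c \<noteq> 0" using assms(2) calculation by auto
  ultimately show ?thesis by blast
qed

lemma sum_psi_pow_subspace:
  assumes "vec.subspace W"
  shows "(\<Sum>x\<in>W. psi_pow x) = - (\<Sum>P\<in>points_of W. psi_pow (point_rep P))"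
proof -
  have "(\<Sum>x\<in>W. psi_pow x) = (\<Sum>x\<in>W - {0}. psi_pow x)"
    by (intro sum.mono_neutral_right) auto
  also have "\<dots> = (\<Sum>P\<in>points_of W. \<Sum>c\<in>UNIV - {0::'a}. psi_pow (point_rep P))"
    by (simp add: sum_nonzero_vectors_by_points[OF assms] psi_pow_scale)
  also have "\<dots> = (\<Sum>P\<in>points_of W. (of_nat CARD('a) - 1) * psi_pow (point_rep P))"
    using card_finite_field_ge_2[where 'a='a] by (simp add: card_Diff_singleton)
  also have "\<dots> = - (\<Sum>P\<in>points_of W. psi_pow (point_rep P))"
    by (simp add: sum_negf)
  finally show ?thesis .
qed

lemma sum_psi_pow_plane: "(\<Sum>s\<in>UNIV. \<Sum>t\<in>UNIV. psi_pow (x + s *s b1 + t *s b2)) = 0"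
proof -
  have "(\<Sum>t\<in>UNIV. psi_pow (x + s *s b1 + t *s b2)) = - (\<psi> b2 ^ (CARD('a) - 1))" for s
    using sum_power_affine_line[of "\<psi> x + to_ac s * \<psi> b1" "\<psi> b2"]
    by (simp add: psi_pow_def psi_add psi_scale)
  thus ?thesis by simp
qed

lemma sum_psi_pow_subspace_eq_0:
  assumes "vec.subspace W" "2 \<le> vec.dim W"
  shows "(\<Sum>x\<in>W. psi_pow x) = 0"
proof -
  obtain b2 b1 where b: "b2 \<in> W" "b1 \<in> W" "b2 \<noteq> 0" "b1 \<notin> vec.span {b2}"
    using assms(2) two_le_dim_iff by blast
  define U where "U = range (\<lambda>(s, t). s *s b1 + t *s b2)"
  show ?thesis
  proof (rule sum_eq_0_if_coset_sums_eq_0[where U = U])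
    show "0 \<in> U" unfolding U_def by (rule range_eqI[of _ _ "(0, 0)"]) simp
    show "u - u' \<in> U" if uU: "u \<in> U" "u' \<in> U" for u u'
    proof -
      obtain s t s' t' where "u = s *s b1 + t *s b2" "u' = s' *s b1 + t' *s b2"
        using uU unfolding U_def by auto
      hence "u - u' = (s - s') *s b1 + (t - t') *s b2" by (simp add: algebra_simps)
      thus ?thesis unfolding U_def by (intro range_eqI[of _ _ "(s - s', t - t')"]) simp
    qed
    show "x + u \<in> W" if "x \<in> W" "u \<in> U" for x u
      using that b assms(1) unfolding U_def
      by (auto intro!: vec.subspace_add vec.subspace_scale)
    show "(\<Sum>u\<in>U. psi_pow (x + u)) = 0" for x
    proof -
      have "(\<Sum>u\<in>U. psi_pow (x + u)) = (\<Sum>(s, t)\<in>UNIV. psi_pow (x + (s *s b1 + t *s b2)))"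
        unfolding U_def by (subst sum.reindex[OF inj_scale_pair[OF b(3,4)]]) (simp add: case_prod_unfold)
      also have "\<dots> = (\<Sum>s\<in>UNIV. \<Sum>t\<in>UNIV. psi_pow (x + s *s b1 + t *s b2))"
        by (simp add: add.assoc flip: UNIV_Times_UNIV sum.cartesian_product)
      also have "\<dots> = 0" by (rule sum_psi_pow_plane)
      finally show ?thesis .
    qed
  qed simp
qed

definition point_map :: "('a ^ 'n) set \<Rightarrow> 'a ^ 'n" where
  "point_map P = inv_into UNIV \<psi> (psi_pow (point_rep P))"

lemma psi_point_map: "\<psi> (point_map P) = psi_pow (point_rep P)"
  unfolding point_map_def by (rule f_inv_into_f[OF psi_pow_in_range])

lemma inj_on_point_map: "inj_on point_map pg_points"
proof (rule inj_onI)
  fix P Q assume P: "P \<in> pg_points" and Q: "Q \<in> pg_points" and "point_map P = point_map Q"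
  hence "psi_pow (point_rep P) = psi_pow (point_rep Q)" by (metis psi_point_map)
  then obtain c where "c \<noteq> 0" "point_rep Q = c *s point_rep P"
    using psi_pow_eq_imp_scale point_rep(1)[OF P] point_rep(1)[OF Q] by blast
  hence "vec.span {point_rep Q} = vec.span {point_rep P}"
    using vec_span_singleton_eq_iff[OF point_rep(1)[OF P]] by blast
  thus "P = Q" using point_rep(2)[OF P] point_rep(2)[OF Q] by simp
qed

lemma sum_point_map_eq_0:
  assumes "vec.subspace W" "2 \<le> vec.dim W"
  shows "(\<Sum>P\<in>points_of W. point_map P) = 0"
proof -
  have "\<psi> (\<Sum>P\<in>points_of W. point_map P) = - (\<Sum>x\<in>W. psi_pow x)"
    by (simp add: psi_sum psi_point_map sum_psi_pow_subspace[OF assms(1)])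
  also have "\<dots> = \<psi> 0" by (simp add: sum_psi_pow_subspace_eq_0[OF assms])
  finally show ?thesis using inj_psi by (simp add: inj_eq)
qed

end

lemma ex_vec_subfield_iso: "\<exists>\<psi> :: 'a::{finite,field} ^ 'n \<Rightarrow> 'a alg_closure. vec_subfield_iso \<psi>"
proof -
  interpret ac: vector_space "\<lambda>c (x :: 'a alg_closure). to_ac c * x"
    by unfold_locales (simp_all add: algebra_simps)
  show ?thesis
  proof (rule obtain_linear_bij_onto_subspace[OF ac.vector_space_axioms
        subspace_power_card_power_eq_self card_power_card_power_eq_self[of "CARD('n)"]])
    fix \<psi> :: "'a ^ 'n \<Rightarrow> 'a alg_closure"
    assume "\<And>v w. \<psi> (v + w) = \<psi> v + \<psi> w" "\<And>c v. \<psi> (c *s v) = to_ac c * \<psi> v" "inj \<psi>"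
      and "range \<psi> = {x. x ^ (CARD('a) ^ CARD('n)) = x}"
    hence "vec_subfield_iso \<psi>" by unfold_locales
    thus ?thesis by blast
  qed simp
qed

lemma additive_under_if_blocks_dim_ge_2:
  fixes B :: "('a::{finite,field} ^ 'n) set set set"
  assumes "\<And>b. b \<in> B \<Longrightarrow> \<exists>W. vec.subspace W \<and> 2 \<le> vec.dim W \<and> b = points_of W"
  shows "\<exists>f :: ('a ^ 'n) set \<Rightarrow> 'a ^ 'n. additive_under pg_points B f"
proof -
  obtain \<psi> :: "'a ^ 'n \<Rightarrow> 'a alg_closure" where "vec_subfield_iso \<psi>"
    using ex_vec_subfield_iso by blast
  then interpret vec_subfield_iso \<psi> .
  have "additive_under pg_points B point_map"
    unfolding additive_under_def using inj_on_point_map sum_point_map_eq_0 assms by blast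
  thus ?thesis by blast
qed

lemma pg_points_subsingleton:
  assumes "CARD('n) = 1" "P \<in> pg_points" "Q \<in> pg_points"
  shows "P = (Q :: ('a::field ^ 'n) set)"
proof -
  have "vec.dim (UNIV :: ('a ^ 'n) set) < 2" using assms(1) by (simp add: card_cart_basis)
  hence "point_rep Q \<in> vec.span {point_rep P}"
    using two_le_dim_iff[of UNIV] point_rep(1)[OF assms(2)] by auto
  then obtain c where c: "point_rep Q = c *s point_rep P" by (auto simp: vec.span_singleton)
  hence "c \<noteq> 0" using point_rep(1)[OF assms(3)] by auto
  with c have "vec.span {point_rep Q} = vec.span {point_rep P}"
    using vec_span_singleton_eq_iff[OF point_rep(1)[OF assms(2)]] by blast
  thus ?thesis using point_rep(2)[OF assms(2)] point_rep(2)[OF assms(3)] by simp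
qed

lemma subspace_design_2_dim_ge_2:
  fixes B :: "('a::field ^ 'n) set set set"
  assumes "subspace_design_2 k lam B" "2 \<le> CARD('n)"
  shows "2 \<le> k"
proof -
  obtain i j :: 'n where "i \<noteq> j"
    using assms(2) card_le_Suc0_iff_eq[of "UNIV :: 'n set"] by auto
  define u where "u = (axis i 1 :: 'a ^ 'n)"
  define w where "w = (axis j 1 :: 'a ^ 'n)"
  have "u \<noteq> 0" "w \<noteq> 0" by (simp_all add: u_def w_def)
  have "w \<notin> vec.span {u}"
  proof
    assume "w \<in> vec.span {u}"
    then obtain c where "w = c *s u" by (auto simp: vec.span_singleton)
    hence "w $ j = c * u $ j" by simp
    thus False using \<open>i \<noteq> j\<close> by (simp add: u_def w_def axis_def)
  qed
  hence "vec.span {u} \<noteq> vec.span {w}" using vec.span_base[of w "{w}"] by auto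
  moreover have "vec.span {u} \<in> pg_points" "vec.span {w} \<in> pg_points"
    using \<open>u \<noteq> 0\<close> \<open>w \<noteq> 0\<close> by (auto simp: pg_points_def)
  ultimately have "card {b \<in> B. vec.span {u} \<in> b \<and> vec.span {w} \<in> b} = lam" "1 \<le> lam"
    using assms(1) unfolding subspace_design_2_def by blast+
  hence "{b \<in> B. vec.span {u} \<in> b \<and> vec.span {w} \<in> b} \<noteq> {}" by (intro notI) simp
  then obtain b where "b \<in> B" "vec.span {u} \<in> b" "vec.span {w} \<in> b" by blast
  moreover obtain W where "vec.dim W = k" "b = points_of W"
    using assms(1) \<open>b \<in> B\<close> unfolding subspace_design_2_def by blast
  ultimately have "vec.span {u} \<subseteq> W" "vec.span {w} \<subseteq> W" by (simp_all add: points_of_def)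
  hence "u \<in> W" "w \<in> W" using vec.span_base[of u "{u}"] vec.span_base[of w "{w}"] by auto
  hence "2 \<le> vec.dim W"
    unfolding two_le_dim_iff using \<open>u \<noteq> 0\<close> \<open>w \<notin> vec.span {u}\<close> by blast
  thus ?thesis using \<open>vec.dim W = k\<close> by simp
qed

theorem theorem5p1:
  fixes B :: "('a::{finite,field} ^ 'n) set set set"
  assumes "subspace_design_2 k lam B"
  shows "\<exists>f :: ('a ^ 'n) set \<Rightarrow> 'a ^ 'n. additive_under pg_points B f"
proof (cases "CARD('n) = 1")
  case True
  hence "inj_on (\<lambda>_. 0) (pg_points :: ('a ^ 'n) set set)"
    by (intro inj_onI) (rule pg_points_subsingleton)
  thus ?thesis unfolding additive_under_def by (intro exI[of _ "\<lambda>_. 0"]) simp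
next
  case False
  have "0 < CARD('n)" by (rule finite_UNIV_card_ge_0) simp
  with False have "2 \<le> k" by (intro subspace_design_2_dim_ge_2[OF assms]) linarith
  show ?thesis
  proof (rule additive_under_if_blocks_dim_ge_2)
    fix b assume "b \<in> B"
    then obtain W where "vec.subspace W" "vec.dim W = k" "b = points_of W"
      using assms unfolding subspace_design_2_def by blast
    with \<open>2 \<le> k\<close> show "\<exists>W. vec.subspace W \<and> 2 \<le> vec.dim W \<and> b = points_of W" by auto
  qed
qed

end
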